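(* Let $G$ be a CDF and define $r(v,b,\alpha)=(v-b)G(b)+\alpha\int_0^bG(y)\,dy$. Then $b^*(v,\alpha)=\arg\max_b r(v,b,\alpha)$, taking the largest maximizer in case of a tie, is a non-decreasing function of $v$ and a non-decreasing function of $\alpha$.
   Context: Here $G$ is the distribution of the highest competing bid in a repeated non-credible second-price auction, $v\in[0,1]$ is the bidder's value, $b\ge 0$ is a bid and $\alpha\in[0,1]$ is the seller's credibility parameter; $r(v,b,\alpha)$ is the bidder's expected reward when bidding $b$ with value $v$ and the winner pays $\alpha d+(1-\alpha)b$, $d\sim G$. *)

theory Defs
  imports "HOL-Analysis.Analysis"
begin

definition is_cdf :: "(real \<Rightarrow> real) \<Rightarrow> bool" where
  "is_cdf G \<longleftrightarrow> mono G \<and> (\<forall>x. continuous (at_right x) G)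
     \<and> (G \<longlongrightarrow> 0) at_bot \<and> (G \<longlongrightarrow> 1) at_top"

definition reward :: "(real \<Rightarrow> real) \<Rightarrow> real \<Rightarrow> real \<Rightarrow> real \<Rightarrow> real" where
  "reward G v b \<alpha> = (v - b) * G b + \<alpha> * integral {0..b} G"

definition is_bstar :: "(real \<Rightarrow> real) \<Rightarrow> real \<Rightarrow> real \<Rightarrow> real \<Rightarrow> bool" where
  "is_bstar G v \<alpha> b \<longleftrightarrow> b \<ge> 0
     \<and> (\<forall>c\<ge>0. reward G v c \<alpha> \<le> reward G v b \<alpha>)
     \<and> (\<forall>c\<ge>0. reward G v c \<alpha> = reward G v b \<alpha> \<longrightarrow> c \<le> b)"

end

theory Submission
  imports Defs
begin

text \<open>Monotone comparative statics: \<open>r\<close> has increasing differences in the bid and each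
parameter. Indeed \<open>r(v',b,\<alpha>) - r(v,b,\<alpha>) = (v' - v) G(b)\<close> and
\<open>r(v,b,\<alpha>') - r(v,b,\<alpha>) = (\<alpha>' - \<alpha>) \<integral>\<^sub>0\<^sup>b G\<close> are non-decreasing in \<open>b\<close>, since \<open>G\<close> is
non-decreasing and non-negative. For such a function the largest maximizer cannot decrease
when the parameter increases: if \<open>b' < b\<close>, the gain from \<open>b'\<close> to \<open>b\<close> at the larger parameter
is at least the (non-negative) gain at the smaller one, so \<open>b\<close> would tie with the largest
maximizer \<open>b'\<close>.\<close>

lemma largest_maximizer_mono:
  fixes f g :: "'a::linorder \<Rightarrow> real"
  assumes "b \<in> S" "b' \<in> S"
    and max_f: "\<forall>c\<in>S. f c \<le> f b"
    and max_g: "\<forall>c\<in>S. g c \<le> g b'"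
    and largest_g: "\<forall>c\<in>S. g c = g b' \<longrightarrow> c \<le> b'"
    and increasing_differences: "\<And>c c'. c \<in> S \<Longrightarrow> c' \<in> S \<Longrightarrow> c' < c \<Longrightarrow> f c - f c' \<le> g c - g c'"
  shows "b \<le> b'"
proof (rule ccontr)
  assume "\<not> b \<le> b'"
  then have "b' < b" by simp
  then have "f b - f b' \<le> g b - g b'"
    using assms(1,2) increasing_differences by blast
  moreover have "f b' \<le> f b" "g b \<le> g b'"
    using assms(1,2) max_f max_g by auto
  ultimately have "g b = g b'" by linarith
  then show False
    using assms(1) largest_g \<open>b' < b\<close> by fastforce
qed

lemma nonneg_if_mono_tendsto_at_bot_0:
  fixes f :: "real \<Rightarrow> real"
  assumes "mono f" "(f \<longlongrightarrow> 0) at_bot"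
  shows "0 \<le> f x"
proof -
  have "eventually (\<lambda>y. f y \<le> f x) at_bot"
    unfolding eventually_at_bot_linorder using \<open>mono f\<close> by (auto simp: mono_def)
  then show ?thesis
    using tendsto_upperbound[OF assms(2)] by simp
qed

lemma cdf_nonneg: "is_cdf G \<Longrightarrow> 0 \<le> G x"
  unfolding is_cdf_def by (blast intro: nonneg_if_mono_tendsto_at_bot_0)

lemma integral_atLeastAtMost_mono_upper:
  fixes G :: "real \<Rightarrow> real"
  assumes "mono G" "\<And>x. 0 \<le> G x" "c' \<le> c"
  shows "integral {a..c'} G \<le> integral {a..c} G"
proof (rule integral_subset_le)
  show "G integrable_on {a..c'}" "G integrable_on {a..c}"
    using \<open>mono G\<close> by (auto intro: integrable_on_mono_on mono_on_subset)
qed (use assms in auto)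

lemma reward_increasing_differences_value:
  assumes "mono G" "v \<le> v'" "c' \<le> c"
  shows "reward G v c \<alpha> - reward G v c' \<alpha> \<le> reward G v' c \<alpha> - reward G v' c' \<alpha>"
proof -
  have "0 \<le> (v' - v) * (G c - G c')"
    using assms by (simp add: monoD)
  then show ?thesis
    unfolding reward_def by (simp add: algebra_simps)
qed

lemma reward_increasing_differences_credibility:
  assumes "is_cdf G" "\<alpha> \<le> \<alpha>'" "c' \<le> c"
  shows "reward G v c \<alpha> - reward G v c' \<alpha> \<le> reward G v c \<alpha>' - reward G v c' \<alpha>'"
proof -
  have "integral {0..c'} G \<le> integral {0..c} G"
    using assms by (intro integral_atLeastAtMost_mono_upper) (auto simp: is_cdf_def cdf_nonneg)
  then have "0 \<le> (\<alpha>' - \<alpha>) * (integral {0..c} G - integral {0..c'} G)"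
    using assms by simp
  then show ?thesis
    unfolding reward_def by (simp add: algebra_simps)
qed

lemma bstar_mono_value:
  assumes "mono G" "v \<le> v'" "is_bstar G v \<alpha> b" "is_bstar G v' \<alpha> b'"
  shows "b \<le> b'"
proof (rule largest_maximizer_mono[where S = "{0..}"])
  show "reward G v c \<alpha> - reward G v c' \<alpha> \<le> reward G v' c \<alpha> - reward G v' c' \<alpha>"
    if "c' < c" for c c'
    using assms(1,2) that by (intro reward_increasing_differences_value) auto
qed (use assms(3,4) in \<open>auto simp: is_bstar_def\<close>)

lemma bstar_mono_credibility:
  assumes "is_cdf G" "\<alpha> \<le> \<alpha>'" "is_bstar G v \<alpha> b" "is_bstar G v \<alpha>' b'"
  shows "b \<le> b'"
proof (rule largest_maximizer_mono[where S = "{0..}"])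
  show "reward G v c \<alpha> - reward G v c' \<alpha> \<le> reward G v c \<alpha>' - reward G v c' \<alpha>'"
    if "c' < c" for c c'
    using assms(1,2) that by (intro reward_increasing_differences_credibility) auto
qed (use assms(3,4) in \<open>auto simp: is_bstar_def\<close>)

theorem lemma3:
  fixes G :: "real \<Rightarrow> real"
  assumes "is_cdf G"
  shows "(\<forall>\<alpha> v v' b b'. 0 \<le> \<alpha> \<and> \<alpha> \<le> 1 \<and> 0 \<le> v \<and> v \<le> v' \<and> v' \<le> 1
            \<and> is_bstar G v \<alpha> b \<and> is_bstar G v' \<alpha> b' \<longrightarrow> b \<le> b')
       \<and> (\<forall>v \<alpha> \<alpha>' b b'. 0 \<le> v \<and> v \<le> 1 \<and> 0 \<le> \<alpha> \<and> \<alpha> \<le> \<alpha>' \<and> \<alpha>' \<le> 1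
            \<and> is_bstar G v \<alpha> b \<and> is_bstar G v \<alpha>' b' \<longrightarrow> b \<le> b')"
proof -
  have "mono G"
    using assms by (simp add: is_cdf_def)
  then show ?thesis
    using bstar_mono_value bstar_mono_credibility[OF assms] by blast
qed

end
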